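(* Let $p$ be an odd prime and $m=p-1$. For $b,b'\in\{0,\ldots,p-1\}$ with $b\ne b'$, if $b+b'=(p-1)/2$ or $b+b'=(3p-1)/2$, then $r_{ave}(\tilde E_b)=r_{ave}(\tilde E_{b'})$.
   Context: $h=(1,\ldots,m)$; $D_0$ is the $p\times m$ matrix whose $i$th row is $i\,h\pmod p$, $i=1,\ldots,p$. The Williams transformation on $\{0,\ldots,p-1\}$ is $W(x)=2x$ for $0\le x<p/2$ and $W(x)=2(p-x)-1$ for $p/2\le x\le p-1$. $D_b=D_0+b\pmod p$, $E_b=W(D_b)$ entrywise, and $\tilde E_b$ is obtained from $E_b$ by deleting its last row (which is $(W(b),\ldots,W(b))$) and replacing each entry $x$ by $x+1$ if $x<W(b)$ and by $x$ if $x>W(b)$. For an $m$-column matrix $O$, $r_{ave}(O)=\sum_{u\ne v}|r_{uv}(O)|/\{m(m-1)\}$ with $r_{uv}(O)$ the Pearson correlation between columns $u$ and $v$. *)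

theory Defs
  imports Complex_Main "HOL-Computational_Algebra.Primes"
begin

text \<open>Matrices are functions nat => nat => real (row index, column index),
  rows indexed 1..n and columns 1..m.\<close>

definition williams :: "nat \<Rightarrow> nat \<Rightarrow> nat" where
  "williams p x = (if real x < real p / 2 then 2 * x else 2 * (p - x) - 1)"

definition D0 :: "nat \<Rightarrow> nat \<Rightarrow> nat \<Rightarrow> nat" where
  "D0 p i j = (i * j) mod p"

definition Db :: "nat \<Rightarrow> nat \<Rightarrow> nat \<Rightarrow> nat \<Rightarrow> nat" where
  "Db p b i j = (D0 p i j + b) mod p"

definition Eb :: "nat \<Rightarrow> nat \<Rightarrow> nat \<Rightarrow> nat \<Rightarrow> nat" where
  "Eb p b i j = williams p (Db p b i j)"

text \<open>Tilde E_b: last row (i = p) deleted, i.e. rows 1..p-1 are used;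
  entries x < W(b) become x+1, entries x > W(b) are unchanged.\<close>
definition Etilde :: "nat \<Rightarrow> nat \<Rightarrow> nat \<Rightarrow> nat \<Rightarrow> real" where
  "Etilde p b i j = (let x = Eb p b i j in
      if x < williams p b then real x + 1 else real x)"

definition col_mean :: "nat \<Rightarrow> (nat \<Rightarrow> nat \<Rightarrow> real) \<Rightarrow> nat \<Rightarrow> real" where
  "col_mean n M u = (\<Sum>i=1..n. M i u) / real n"

definition pearson :: "nat \<Rightarrow> (nat \<Rightarrow> nat \<Rightarrow> real) \<Rightarrow> nat \<Rightarrow> nat \<Rightarrow> real" where
  "pearson n M u v =
     (\<Sum>i=1..n. (M i u - col_mean n M u) * (M i v - col_mean n M v)) /
     sqrt ((\<Sum>i=1..n. (M i u - col_mean n M u)^2) * (\<Sum>i=1..n. (M i v - col_mean n M v)^2))"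

definition r_ave :: "nat \<Rightarrow> nat \<Rightarrow> (nat \<Rightarrow> nat \<Rightarrow> real) \<Rightarrow> real" where
  "r_ave n m M = (\<Sum>u\<in>{1..m}. \<Sum>v\<in>{1..m} - {u}. \<bar>pearson n M u v\<bar>) / (real m * (real m - 1))"

end

theory Submission
  imports Defs
begin

text \<open>Write \<open>h = (p - 1)/2\<close>. The hypothesis says \<open>b' \<equiv> h - b (mod p)\<close>, so row \<open>i\<close> of
  \<open>D\<^sub>b\<^sub>'\<close> is \<open>h\<close> minus row \<open>p - i\<close> of \<open>D\<^sub>b\<close> (mod \<open>p\<close>). The Williams transformation turns
  \<open>y \<mapsto> h - y\<close> into \<open>x \<mapsto> p - 1 - x\<close>, and since primality keeps every entry of rows
  \<open>1..p-1\<close> of \<open>E\<^sub>b\<close> away from \<open>W(b)\<close>, the relabelling gives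
  \<open>\<tilde>E\<^sub>b\<^sub>'(i, j) = p - \<tilde>E\<^sub>b(p - i, j)\<close>. A row permutation combined with a reflection
  \<open>x \<mapsto> c - x\<close> of the columns leaves every Pearson correlation unchanged.\<close>

lemma col_mean_reflect_permute:
  assumes "bij_betw \<sigma> {1..n} {1..n}"
    and "\<And>i. i \<in> {1..n} \<Longrightarrow> M' i u = c - M (\<sigma> i) u" and "n > 0"
  shows "col_mean n M' u = c - col_mean n M u"
proof -
  have "(\<Sum>i=1..n. M' i u) = (\<Sum>i=1..n. c - M (\<sigma> i) u)"
    using assms(2) by (intro sum.cong) auto
  also have "\<dots> = real n * c - (\<Sum>i=1..n. M (\<sigma> i) u)"
    by (simp add: sum_subtractf)
  also have "(\<Sum>i=1..n. M (\<sigma> i) u) = (\<Sum>i=1..n. M i u)"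
    using sum.reindex_bij_betw[OF assms(1), of "\<lambda>i. M i u"] by simp
  finally show ?thesis
    using \<open>n > 0\<close> unfolding col_mean_def by (simp add: field_simps)
qed

lemma pearson_reflect_permute:
  assumes \<sigma>: "bij_betw \<sigma> {1..n} {1..n}"
    and M': "\<And>i w. i \<in> {1..n} \<Longrightarrow> w \<in> {u, v} \<Longrightarrow> M' i w = c - M (\<sigma> i) w"
    and "n > 0"
  shows "pearson n M' u v = pearson n M u v"
proof -
  have deviation: "M' i w - col_mean n M' w = - (M (\<sigma> i) w - col_mean n M w)"
    if "i \<in> {1..n}" "w \<in> {u, v}" for i w
    using col_mean_reflect_permute[OF \<sigma> _ \<open>n > 0\<close>, of M' w c M] M' that by auto
  have reindex: "(\<Sum>i=1..n. f (\<sigma> i)) = (\<Sum>i=1..n. f i)" for f :: "nat \<Rightarrow> real"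
    using sum.reindex_bij_betw[OF \<sigma>] by simp
  have covariance:
    "(\<Sum>i=1..n. (M' i u - col_mean n M' u) * (M' i v - col_mean n M' v))
      = (\<Sum>i=1..n. (M i u - col_mean n M u) * (M i v - col_mean n M v))"
    (is "_ = sum ?f _")
  proof -
    have "(\<Sum>i=1..n. (M' i u - col_mean n M' u) * (M' i v - col_mean n M' v))
        = (\<Sum>i=1..n. ?f (\<sigma> i))"
      by (intro sum.cong) (simp_all add: deviation algebra_simps)
    then show ?thesis using reindex by simp
  qed
  have variance: "(\<Sum>i=1..n. (M' i w - col_mean n M' w)^2) = (\<Sum>i=1..n. (M i w - col_mean n M w)^2)"
    (is "_ = sum ?f _") if "w \<in> {u, v}" for w
  proof -
    have "(\<Sum>i=1..n. (M' i w - col_mean n M' w)^2) = (\<Sum>i=1..n. ?f (\<sigma> i))"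
      using deviation[OF _ that] by (intro sum.cong) (simp_all add: power2_commute)
    then show ?thesis using reindex by simp
  qed
  show ?thesis
    unfolding pearson_def covariance using variance[of u] variance[of v] by simp
qed

lemma williams_nat_iff: "williams p x = (if 2 * x < p then 2 * x else 2 * (p - x) - 1)"
proof -
  have "(real x < real p / 2) = (2 * x < p)" by linarith
  then show ?thesis unfolding williams_def by simp
qed

lemma williams_less: "y < p \<Longrightarrow> williams p y < p"
  by (simp add: williams_nat_iff) arith

lemma williams_inj_on:
  assumes "odd p"
  shows "inj_on (williams p) {..<p}"
  using assms by (auto simp: inj_on_def williams_nat_iff split: if_splits; presburger)

lemma williams_reflect:
  assumes "odd p" "y < p"
  shows "williams p ((p div 2 + p - y) mod p) = p - 1 - williams p y"
proof -
  obtain k where k: "p = 2 * k + 1" using assms(1) oddE by blast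
  show ?thesis
  proof (cases "2 * y < p")
    case True
    then have "p div 2 + p - y = (k - y) + p" using k by simp
    then have "(p div 2 + p - y) mod p = (k - y) mod p" by (simp only: mod_add_self2)
    also have "\<dots> = k - y" using k by simp
    finally have "(p div 2 + p - y) mod p = k - y" .
    then show ?thesis using True k by (simp add: williams_nat_iff) arith
  next
    case False
    then have "(p div 2 + p - y) mod p = k + p - y" using k assms(2) by simp
    then show ?thesis using False k assms(2) by (simp add: williams_nat_iff) arith
  qed
qed

lemma Db_reflect:
  assumes "i \<le> p" "b < p" "b' = (h + p - b) mod p"
  shows "Db p b' i j = (h + p - Db p b (p - i) j) mod p"
proof -
  define D where "D = Db p b (p - i) j"
  have "p > 0" using assms(2) by simp
  then have "D < p" unfolding D_def Db_def by simp
  have D: "int D = ((int p - int i) * int j + int b) mod int p"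
    using assms(1) unfolding D_def Db_def D0_def by (simp add: zmod_int mod_add_left_eq of_nat_diff)
  have "int (Db p b' i j) = (int i * int j + (int h + int p - int b)) mod int p"
    using assms unfolding Db_def D0_def by (simp add: zmod_int mod_add_eq of_nat_diff add_diff_eq)
  also have "\<dots> = (int h + int p - ((int p - int i) * int j + int b)) mod int p"
    by (rule mod_eq_dvd_iff[THEN iffD2]) (simp add: algebra_simps)
  also have "\<dots> = (int h + int p - int D) mod int p"
    unfolding D by (simp add: mod_diff_right_eq)
  also have "\<dots> = int ((h + p - D) mod p)"
    using \<open>D < p\<close> by (simp add: zmod_int of_nat_diff)
  finally show ?thesis unfolding D_def by simp
qed

lemma Db_neq_shift:
  assumes "prime p" "b < p" "i \<in> {1..p-1}" "j \<in> {1..p-1}"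
  shows "Db p b i j \<noteq> b"
proof
  assume "Db p b i j = b"
  then have "(i * j + b) mod p = b mod p"
    using assms(2) unfolding Db_def D0_def by (simp add: mod_add_left_eq)
  then have "p dvd i * j"
    using mod_eq_dvd_iff_nat[of b "i * j + b" p] by simp
  then have "p dvd i \<or> p dvd j" using assms(1) prime_dvd_mult_iff by blast
  then show False using assms(3,4) by (auto dest: dvd_imp_le)
qed

lemma Etilde_reflect:
  assumes "prime p" "odd p" "b < p" "b' = (p div 2 + p - b) mod p"
    and i: "i \<in> {1..p-1}" and j: "j \<in> {1..p-1}"
  shows "Etilde p b' i j = real p - Etilde p b (p - i) j"
proof -
  define D where "D = Db p b (p - i) j"
  have "D < p" using assms(3) unfolding D_def Db_def by simp
  have "p - i \<in> {1..p-1}" using i by auto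
  then have "D \<noteq> b" unfolding D_def using Db_neq_shift assms(1,3) j by blast
  define x where "x = williams p D"
  define w where "w = williams p b"
  have "x < p" "w < p" unfolding x_def w_def using williams_less \<open>D < p\<close> assms(3) by auto
  have "x \<noteq> w"
    unfolding x_def w_def using williams_inj_on[OF assms(2)] \<open>D < p\<close> assms(3) \<open>D \<noteq> b\<close>
    by (auto dest: inj_onD)
  have E: "Eb p b (p - i) j = x" unfolding Eb_def x_def D_def ..
  have E': "Eb p b' i j = p - 1 - x"
    using Db_reflect[of i p b b' "p div 2" j] williams_reflect[OF assms(2) \<open>D < p\<close>] assms i
    unfolding Eb_def x_def D_def by auto
  have w': "williams p b' = p - 1 - w"
    unfolding w_def assms(4) using williams_reflect[OF assms(2,3)] .
  show ?thesis
    unfolding Etilde_def Let_def E E' w' w_def[symmetric]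
    using \<open>x < p\<close> \<open>w < p\<close> \<open>x \<noteq> w\<close> by (auto simp: of_nat_diff)
qed

lemma partner_shift_eq:
  fixes p b b' :: nat
  assumes "odd p" "b' < p" "2 * (b + b') = p - 1 \<or> 2 * (b + b') = 3 * p - 1"
  shows "b' = (p div 2 + p - b) mod p"
proof -
  obtain k where k: "p = 2 * k + 1" using assms(1) oddE by blast
  from assms(3) have "p div 2 + p - b = b' + p \<or> p div 2 + p - b = b'"
    using k by auto
  then show ?thesis using assms(2) by auto
qed

lemma r_ave_cong:
  assumes "\<And>u v. u \<in> {1..m} \<Longrightarrow> v \<in> {1..m} \<Longrightarrow> pearson n M u v = pearson n M' u v"
  shows "r_ave n m M = r_ave n m M'"
  unfolding r_ave_def using assms by (intro arg_cong2[where f="(/)"] sum.cong refl) auto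

theorem proposition1:
  fixes p b b' :: nat
  assumes "prime p" and "odd p"
    and "b < p" and "b' < p" and "b \<noteq> b'"
    and "2 * (b + b') = p - 1 \<or> 2 * (b + b') = 3 * p - 1"
  shows "r_ave (p - 1) (p - 1) (Etilde p b) = r_ave (p - 1) (p - 1) (Etilde p b')"
proof (rule r_ave_cong)
  fix u v assume uv: "u \<in> {1..p-1}" "v \<in> {1..p-1}"
  have b': "b' = (p div 2 + p - b) mod p"
    using partner_shift_eq assms(2,4,6) by blast
  have "bij_betw (\<lambda>i. p - i) {1..p-1} {1..p-1}"
    by (rule bij_betw_byWitness[where f'="\<lambda>i. p - i"]) auto
  moreover have "p - 1 > 0" using prime_ge_2_nat[OF assms(1)] by simp
  ultimately show "pearson (p - 1) (Etilde p b) u v = pearson (p - 1) (Etilde p b') u v"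
    using Etilde_reflect[OF assms(1-3) b'] uv
    by (intro pearson_reflect_permute[symmetric, where c="real p"]) auto
qed

end
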